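(* Let $F$ be a non-archimedean local field with ring of integers $\mathcal{O}$ and uniformizer $\varpi$, let $G=\mathrm{GL}_{2n}(F)$ with diagonal torus $T$, upper triangular Borel subgroup $B$ and Weyl group $W$ (the permutation matrices), and let $\Delta$ be the set of simple roots determined by $B$. Let $S,T'\subset\Delta$ and let $w\in W$ be such that $wT'>0$ and $w^{-1}S>0$. Then \[\operatorname{Levi}(w^{-1}P_{\Delta,S}w)\cap J_{\Delta,T'}=J_{w^{-1}S,\;T'\cap w^{-1}S}.\]
   Context: For sets $S,T$ of roots of $G$ with respect to the diagonal torus, $P_{S,T}$ denotes the subgroup of $G$ whose Lie algebra is $\mathfrak{p}_{S,T}=\mathfrak{t}\oplus\bigoplus_{\alpha}\mathfrak{g}_\alpha$, the sum being over all roots $\alpha$ lying in $\mathbb{Z}_{\geq 0}S-\mathbb{Z}_{\geq 0}T$ (i.e. expressible as a nonnegative integer combination of elements of $S$ minus a nonnegative integer combination of elements of $T$); here $\mathfrak{t}$ is the Lie algebra of the diagonal torus and $\mathfrak{g}_\alpha$ the root space. Thus $P_{\Delta,\emptyset}=B$, $P_{\Delta,\Delta}=G$, $P_{\Delta,S}$ is the standard parabolic subgroup associated with $S\subset\Delta$, and its Levi subgroup is $P_{S,S}$. One sets $J_{S,T}=\{g\in P_{S,S}(\mathcal{O}) : g \bmod \varpi\in P_{S,T}(\mathcal{O}/\varpi)\}$ (so $J_{\Delta,\emptyset}$ is the Iwahori subgroup and $J_{\Delta,\Delta}=\mathrm{GL}_{2n}(\mathcal{O})$). For a set $R$ of roots,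 $wR>0$ means $w$ maps every root in $R$ to a positive root. *)

theory Defs
  imports Main "HOL-Combinatorics.Permutations"
begin

text \<open>A field F with a normalized discrete valuation v (v x is only meaningful for x \<noteq> 0),
  complete with respect to v and with finite residue field.\<close>

definition val_ring :: "('a::field \<Rightarrow> int) \<Rightarrow> 'a set" where
  "val_ring v = {x. x = 0 \<or> v x \<ge> 0}"

definition is_nonarch_local_field :: "('a::field \<Rightarrow> int) \<Rightarrow> bool" where
  "is_nonarch_local_field v \<longleftrightarrow>
     (\<forall>x y. x \<noteq> 0 \<longrightarrow> y \<noteq> 0 \<longrightarrow> v (x * y) = v x + v y)
   \<and> (\<forall>x y. x \<noteq> 0 \<longrightarrow> y \<noteq> 0 \<longrightarrow> x + y \<noteq> 0 \<longrightarrow> v (x + y) \<ge> min (v x) (v y))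
   \<and> (\<exists>x. x \<noteq> 0 \<and> v x = 1)
   \<and> (\<forall>f :: nat \<Rightarrow> 'a.
        (\<forall>k::int. \<exists>N. \<forall>p\<ge>N. \<forall>q\<ge>N. f p = f q \<or> v (f p - f q) \<ge> k) \<longrightarrow>
        (\<exists>L. \<forall>k::int. \<exists>N. \<forall>p\<ge>N. f p = L \<or> v (f p - L) \<ge> k))
   \<and> (\<exists>R. finite R \<and> R \<subseteq> val_ring v \<and>
        (\<forall>x\<in>val_ring v. \<exists>r\<in>R. x - r = 0 \<or> v (x - r) \<ge> 1))"

definition is_uniformizer :: "('a::field \<Rightarrow> int) \<Rightarrow> 'a \<Rightarrow> bool" where
  "is_uniformizer v \<pi> \<longleftrightarrow> \<pi> \<noteq> 0 \<and> v \<pi> = 1"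

definition unif_ideal :: "('a::field \<Rightarrow> int) \<Rightarrow> 'a \<Rightarrow> 'a set" where
  "unif_ideal v \<pi> = {\<pi> * x | x. x \<in> val_ring v}"

type_synonym 'a sqmat = "nat \<Rightarrow> nat \<Rightarrow> 'a"

definition mats :: "nat \<Rightarrow> 'a::zero sqmat set" where
  "mats m = {A. \<forall>i j. (m \<le> i \<or> m \<le> j) \<longrightarrow> A i j = 0}"

definition mmul :: "nat \<Rightarrow> 'a::comm_ring_1 sqmat \<Rightarrow> 'a sqmat \<Rightarrow> 'a sqmat" where
  "mmul m A B = (\<lambda>i j. if i < m \<and> j < m then (\<Sum>k<m. A i k * B k j) else 0)"

definition idm :: "nat \<Rightarrow> 'a::comm_ring_1 sqmat" where
  "idm m = (\<lambda>i j. if i < m \<and> i = j then 1 else 0)"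

text \<open>GL_m over the subring Rg of the field (Rg = UNIV gives GL_m(F), Rg = O gives GL_m(O)).\<close>
definition GLm :: "nat \<Rightarrow> 'a::field set \<Rightarrow> 'a sqmat set" where
  "GLm m Rg = {A \<in> mats m. (\<forall>i j. A i j \<in> Rg) \<and>
      (\<exists>B \<in> mats m. (\<forall>i j. B i j \<in> Rg) \<and> mmul m A B = idm m \<and> mmul m B A = idm m)}"

text \<open>Permutation matrix of a permutation \<sigma> of {..<m}: it sends e_j to e_(\<sigma> j).\<close>
definition perm_mat :: "nat \<Rightarrow> (nat \<Rightarrow> nat) \<Rightarrow> 'a::comm_ring_1 sqmat" where
  "perm_mat m \<sigma> = (\<lambda>i j. if i < m \<and> j < m \<and> i = \<sigma> j then 1 else 0)"

definition conj_by_perm :: "nat \<Rightarrow> (nat \<Rightarrow> nat) \<Rightarrow> 'a::comm_ring_1 sqmat set \<Rightarrow> 'a sqmat set" where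
  "conj_by_perm m \<sigma> H =
     {mmul m (perm_mat m (inv \<sigma>)) (mmul m g (perm_mat m \<sigma>)) | g. g \<in> H}"

text \<open>The root e_i - e_j is represented by the pair (i,j), i \<noteq> j.\<close>
definition roots :: "nat \<Rightarrow> (nat \<times> nat) set" where
  "roots m = {(i, j). i < m \<and> j < m \<and> i \<noteq> j}"

definition root_vec :: "nat \<times> nat \<Rightarrow> nat \<Rightarrow> int" where
  "root_vec \<alpha> k = (if k = fst \<alpha> then 1 else 0) - (if k = snd \<alpha> then 1 else 0)"

definition simple_roots :: "nat \<Rightarrow> (nat \<times> nat) set" where
  "simple_roots m = {(i, i + 1) | i. i + 1 < m}"

definition pos_root :: "nat \<times> nat \<Rightarrow> bool" where
  "pos_root \<alpha> \<longleftrightarrow> fst \<alpha> < snd \<alpha>"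

definition root_act :: "(nat \<Rightarrow> nat) \<Rightarrow> nat \<times> nat \<Rightarrow> nat \<times> nat" where
  "root_act \<sigma> \<alpha> = (\<sigma> (fst \<alpha>), \<sigma> (snd \<alpha>))"

definition in_cone :: "(nat \<times> nat) set \<Rightarrow> (nat \<times> nat) set \<Rightarrow> nat \<times> nat \<Rightarrow> bool" where
  "in_cone S T \<alpha> \<longleftrightarrow> (\<exists>a b :: nat \<times> nat \<Rightarrow> nat.
      root_vec \<alpha> = (\<lambda>k. (\<Sum>s\<in>S. int (a s) * root_vec s k) - (\<Sum>t\<in>T. int (b t) * root_vec t k)))"

text \<open>P_{S,T}(Rg): elements of GL_m(Rg) whose off-diagonal support lies in the root spaces
  of p_{S,T} (the group with Lie algebra t + sum of g_\<alpha>, \<alpha> \<in> Z_{\<ge>0}S - Z_{\<ge>0}T).\<close>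
definition P_ST :: "nat \<Rightarrow> 'a::field set \<Rightarrow> (nat \<times> nat) set \<Rightarrow> (nat \<times> nat) set \<Rightarrow> 'a sqmat set" where
  "P_ST m Rg S T = {g \<in> GLm m Rg. \<forall>\<alpha>\<in>roots m. g (fst \<alpha>) (snd \<alpha>) \<noteq> 0 \<longrightarrow> in_cone S T \<alpha>}"

text \<open>J_{S,T} = {g \<in> P_{S,S}(O) : g mod \<pi> \<in> P_{S,T}(O/\<pi>)}; the reduction of g \<in> GL_m(O) is
  automatically invertible, so the condition is that entries outside the pattern of
  P_{S,T} lie in \<pi>O.\<close>
definition J_ST :: "('a::field \<Rightarrow> int) \<Rightarrow> 'a \<Rightarrow> nat \<Rightarrow> (nat \<times> nat) set \<Rightarrow> (nat \<times> nat) set \<Rightarrow> 'a sqmat set" where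
  "J_ST v \<pi> m S T = {g \<in> P_ST m (val_ring v) S S.
      \<forall>\<alpha>\<in>roots m. \<not> in_cone S T \<alpha> \<longrightarrow> g (fst \<alpha>) (snd \<alpha>) \<in> unif_ideal v \<pi>}"

definition elem_mat :: "nat \<Rightarrow> nat \<Rightarrow> nat \<Rightarrow> 'a::comm_ring_1 \<Rightarrow> 'a sqmat" where
  "elem_mat m i j c = (\<lambda>k l. idm m k l + (if k = i \<and> l = j then c else 0))"

definition roots_of :: "nat \<Rightarrow> 'a::comm_ring_1 sqmat set \<Rightarrow> (nat \<times> nat) set" where
  "roots_of m H = {\<alpha> \<in> roots m. \<forall>c. elem_mat m (fst \<alpha>) (snd \<alpha>) c \<in> H}"

text \<open>Levi subgroup (containing the diagonal torus) of a parabolic H \<supseteq> T: generated by T and the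
  U_\<alpha> with \<plusminus>\<alpha> roots of H, i.e. the elements of H supported on the diagonal and on such \<alpha>.\<close>
definition Levi :: "nat \<Rightarrow> 'a::comm_ring_1 sqmat set \<Rightarrow> 'a sqmat set" where
  "Levi m H = {g \<in> H. \<forall>\<alpha>\<in>roots m. g (fst \<alpha>) (snd \<alpha>) \<noteq> 0 \<longrightarrow>
                  \<alpha> \<in> roots_of m H \<and> (snd \<alpha>, fst \<alpha>) \<in> roots_of m H}"

end

theory Submission
  imports Defs
begin

(*
  Over sets of simple roots, e_i - e_j lies in Z>=0 A - Z>=0 B exactly when i < j and all simple
  roots between i and j lie in A, or j < i and all of them lie in B.  Conjugation by w transports
  such cones, so the Levi subgroup of w^-1 P_{Delta,S} w is P_{S',S'} with S' = w^-1 S.  Both sides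
  of the identity then consist of the integral matrices supported on this Levi subgroup, and they
  differ only in which entries are required to lie in pi O; hence it suffices to compare the cones
  of J_{Delta,T'} and J_{S',T' \<inter> S'} on the roots of the Levi subgroup.  Inside a block of S the
  hypothesis w^-1 S > 0 makes sigma^-1 strictly increasing, and w T' > 0 makes sigma strictly
  increasing along T'-segments; together they force sigma to be a translation on every T'-segment
  of the block, so these segments correspond exactly to the segments of sigma T' \<inter> S.
*)

section \<open>Cones spanned by simple roots\<close>

(* For i < j the root e_i - e_j is the sum of the simple roots (k, k+1) with i <= k < j. *)
definition segment_in :: "(nat \<times> nat) set \<Rightarrow> nat \<Rightarrow> nat \<Rightarrow> bool" where
  "segment_in A i j \<longleftrightarrow> (\<forall>k\<in>{i..<j}. (k, Suc k) \<in> A)"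

lemma simple_roots_eq: "simple_roots m = (\<lambda>k. (k, Suc k)) ` {k. Suc k < m}"
  by (auto simp: simple_roots_def)

lemma finite_simple_roots: "finite (simple_roots m)"
  unfolding simple_roots_eq by (rule finite_imageI) (auto intro: finite_subset[of _ "{..<m}"])

lemma segment_in_simple_roots: "j < m \<Longrightarrow> segment_in (simple_roots m) i j"
  by (auto simp: segment_in_def simple_roots_def)

lemma root_vec_swap: "root_vec (j, i) k = - root_vec (i, j) k"
  by (simp add: root_vec_def)

lemma in_cone_swap_imp:
  assumes "in_cone A B (j, i)"
  shows "in_cone B A (i, j)"
proof -
  obtain a b :: "nat \<times> nat \<Rightarrow> nat" where eq: "\<And>k. root_vec (j, i) k =
      (\<Sum>s\<in>A. int (a s) * root_vec s k) - (\<Sum>t\<in>B. int (b t) * root_vec t k)"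
    using assms unfolding in_cone_def fun_eq_iff by blast
  have "root_vec (i, j) k =
      (\<Sum>t\<in>B. int (b t) * root_vec t k) - (\<Sum>s\<in>A. int (a s) * root_vec s k)" for k
    using eq[of k] root_vec_swap[of j i k] by linarith
  then show ?thesis
    unfolding in_cone_def by blast
qed

lemma in_cone_swap: "in_cone A B (j, i) \<longleftrightarrow> in_cone B A (i, j)"
  using in_cone_swap_imp by blast

lemma sum_root_vec_atMost:
  "(\<Sum>k\<le>p. root_vec s k) = (if fst s \<le> p then 1 else 0) - (if snd s \<le> p then 1 else 0)"
  by (simp add: root_vec_def sum_subtractf)

lemma sum_simple_root_vec_atMost:
  assumes "A \<subseteq> simple_roots m"
  shows "(\<Sum>s\<in>A. c s * (\<Sum>k\<le>p. root_vec s k)) = (if (p, Suc p) \<in> A then c (p, Suc p) else 0)"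
proof -
  have "finite A" using assms finite_simple_roots finite_subset by blast
  have "(\<Sum>s\<in>A. c s * (\<Sum>k\<le>p. root_vec s k)) = (\<Sum>s\<in>A. if s = (p, Suc p) then c s else 0)"
    by (rule sum.cong) (use assms in \<open>auto simp: sum_root_vec_atMost simple_roots_def\<close>)
  with \<open>finite A\<close> show ?thesis by (simp add: sum.delta')
qed

lemma sum_root_vec_segment:
  "i \<le> j \<Longrightarrow> (\<Sum>k\<in>{i..<j}. root_vec (k, Suc k) x) = root_vec (i, j) x"
  by (induction j rule: dec_induct) (auto simp: root_vec_def)

(* Summing the cone equation over the coordinates up to p isolates the coefficient of the
   simple root (p, p+1), which must therefore be positive for every p between i and j. *)
lemma in_cone_imp_segment_in:
  assumes "A \<subseteq> simple_roots m" "B \<subseteq> simple_roots m" "in_cone A B (i, j)"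
  shows "segment_in A i j"
  unfolding segment_in_def
proof
  fix p assume p: "p \<in> {i..<j}"
  obtain a b :: "nat \<times> nat \<Rightarrow> nat" where eq: "root_vec (i, j) =
      (\<lambda>k. (\<Sum>s\<in>A. int (a s) * root_vec s k) - (\<Sum>t\<in>B. int (b t) * root_vec t k))"
    using assms(3) unfolding in_cone_def by blast
  have "1 = (\<Sum>k\<le>p. root_vec (i, j) k)"
    using p by (simp add: sum_root_vec_atMost)
  also have "\<dots> = (\<Sum>s\<in>A. int (a s) * (\<Sum>k\<le>p. root_vec s k))
      - (\<Sum>t\<in>B. int (b t) * (\<Sum>k\<le>p. root_vec t k))"
    by (simp add: eq sum_subtractf sum_distrib_left sum.swap[of _ "{..p}"])
  also have "\<dots> = (if (p, Suc p) \<in> A then int (a (p, Suc p)) else 0)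
      - (if (p, Suc p) \<in> B then int (b (p, Suc p)) else 0)"
    using assms(1,2) by (simp add: sum_simple_root_vec_atMost)
  finally show "(p, Suc p) \<in> A" by (auto split: if_splits)
qed

lemma segment_in_imp_in_cone:
  assumes "A \<subseteq> simple_roots m" "i \<le> j" "segment_in A i j"
  shows "in_cone A B (i, j)"
proof -
  let ?X = "(\<lambda>k. (k, Suc k)) ` {i..<j}"
  have "finite A" using assms(1) finite_simple_roots finite_subset by blast
  have X: "?X \<subseteq> A" using assms(3) by (auto simp: segment_in_def)
  have "(\<Sum>s\<in>A. int (if s \<in> ?X then 1 else 0) * root_vec s k)
      = (\<Sum>s\<in>A. if s \<in> ?X then root_vec s k else 0)" for k
    by (rule sum.cong) auto
  also have "\<dots> k = (\<Sum>s\<in>?X. root_vec s k)" for k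
    using \<open>finite A\<close> X by (simp add: sum.inter_restrict[symmetric] Int_absorb1)
  also have "(\<Sum>s\<in>?X. root_vec s k) = root_vec (i, j) k" for k
    using assms(2) by (simp add: sum.reindex inj_on_def sum_root_vec_segment)
  finally show ?thesis
    unfolding in_cone_def
    by (intro exI[of _ "\<lambda>s. if s \<in> ?X then 1 else 0"] exI[of _ "\<lambda>_. 0"]) auto
qed

lemma in_cone_simple_iff:
  assumes "A \<subseteq> simple_roots m" "B \<subseteq> simple_roots m" "i \<noteq> j"
  shows "in_cone A B (i, j) \<longleftrightarrow> (i < j \<and> segment_in A i j) \<or> (j < i \<and> segment_in B j i)"
proof (cases "i < j")
  case True
  then show ?thesis
    using in_cone_imp_segment_in[OF assms(1,2)] segment_in_imp_in_cone[OF assms(1)] by auto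
next
  case False
  with assms(3) have "j < i" by simp
  then show ?thesis
    using in_cone_swap[of A B i j] in_cone_imp_segment_in[OF assms(2,1)]
      segment_in_imp_in_cone[OF assms(2)] by auto
qed

lemma root_act_inv_root_act: "bij f \<Longrightarrow> root_act (inv f) (root_act f s) = s"
  by (simp add: root_act_def bij_is_inj)

lemma inj_root_act: "bij f \<Longrightarrow> inj (root_act f)"
  by (rule inj_on_inverseI[of _ "root_act (inv f)"]) (simp add: root_act_inv_root_act)

lemma root_vec_root_act:
  assumes "bij f"
  shows "root_vec (root_act f s) k = root_vec s (inv f k)"
proof -
  have "k = f x \<longleftrightarrow> inv f k = x" for x
    using assms bij_inv_eq_iff by metis
  then show ?thesis
    by (simp add: root_vec_def root_act_def)
qed

lemma in_cone_root_act:
  assumes "bij f" "in_cone A B \<alpha>"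
  shows "in_cone (root_act f ` A) (root_act f ` B) (root_act f \<alpha>)"
proof -
  obtain a b :: "nat \<times> nat \<Rightarrow> nat" where eq: "\<And>k. root_vec \<alpha> k =
      (\<Sum>s\<in>A. int (a s) * root_vec s k) - (\<Sum>t\<in>B. int (b t) * root_vec t k)"
    using assms(2) unfolding in_cone_def fun_eq_iff by blast
  have reindex: "(\<Sum>s\<in>X. int (c s) * root_vec s (inv f k))
      = (\<Sum>s\<in>root_act f ` X. int ((c \<circ> root_act (inv f)) s) * root_vec s k)"
    for X and c :: "nat \<times> nat \<Rightarrow> nat" and k
    using assms(1) by (simp add: sum.reindex inj_on_subset[OF inj_root_act] root_act_inv_root_act
        root_vec_root_act)
  have "root_vec (root_act f \<alpha>) k =
      (\<Sum>s\<in>root_act f ` A. int ((a \<circ> root_act (inv f)) s) * root_vec s k)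
      - (\<Sum>t\<in>root_act f ` B. int ((b \<circ> root_act (inv f)) t) * root_vec t k)" for k
    using eq[of "inv f k"] by (simp add: root_vec_root_act[OF assms(1)] reindex)
  then show ?thesis
    unfolding in_cone_def by blast
qed

lemma in_cone_inv_root_act_iff:
  assumes "bij f"
  shows "in_cone (root_act (inv f) ` A) (root_act (inv f) ` B) \<alpha> \<longleftrightarrow> in_cone A B (root_act f \<alpha>)"
proof
  assume "in_cone (root_act (inv f) ` A) (root_act (inv f) ` B) \<alpha>"
  from in_cone_root_act[OF assms this] show "in_cone A B (root_act f \<alpha>)"
    using assms by (simp add: image_image root_act_def bij_is_surj surj_f_inv_f)
next
  assume "in_cone A B (root_act f \<alpha>)"
  from in_cone_root_act[OF bij_imp_bij_inv[OF assms] this]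
  show "in_cone (root_act (inv f) ` A) (root_act (inv f) ` B) \<alpha>"
    using assms by (simp add: root_act_inv_root_act)
qed

section \<open>Segments under a permutation\<close>

lemma increasing_steps_imp_shift_le:
  fixes f :: "nat \<Rightarrow> nat"
  assumes "\<forall>q\<in>{a..<b}. f q < f (Suc q)" "a \<le> x" "x \<le> b"
  shows "f a + (x - a) \<le> f x"
  using assms(2,3)
proof (induction x rule: dec_induct)
  case (step x)
  with assms(1) have "f x < f (Suc x)" by simp
  with step show ?case by simp
qed simp

lemma unit_steps_imp_shift_eq:
  fixes f :: "nat \<Rightarrow> nat"
  assumes "\<forall>q\<in>{a..<b}. f (Suc q) = Suc (f q)" "a \<le> x" "x \<le> b"
  shows "f x = f a + (x - a)"
  using assms(2,3)
proof (induction x rule: dec_induct)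
  case (step x)
  with assms(1) have "f (Suc x) = Suc (f x)" by simp
  with step show ?case by simp
qed simp

lemma increasing_steps_rigid:
  fixes f :: "nat \<Rightarrow> nat"
  assumes "\<forall>q\<in>{a..<b}. f q < f (Suc q)" "f b \<le> f a + (b - a)" "a \<le> x" "x \<le> b"
  shows "f x = f a + (x - a)"
proof -
  have "f a + (x - a) \<le> f x"
    using assms(1,3,4) by (rule increasing_steps_imp_shift_le)
  moreover have "f x + (b - x) \<le> f b"
    by (rule increasing_steps_imp_shift_le[of x b]) (use assms in auto)
  ultimately show ?thesis
    using assms(2-4) by linarith
qed

lemma segment_in_Int: "segment_in (A \<inter> B) i j \<longleftrightarrow> segment_in A i j \<and> segment_in B i j"
  by (auto simp: segment_in_def)

lemma segment_in_increasing_steps: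
  assumes "\<forall>\<alpha>\<in>A. pos_root (root_act f \<alpha>)" "segment_in A p r"
  shows "\<forall>q\<in>{p..<r}. f q < f (Suc q)"
proof
  fix q assume "q \<in> {p..<r}"
  with assms(2) have "(q, Suc q) \<in> A"
    by (simp add: segment_in_def)
  from bspec[OF assms(1) this] show "f q < f (Suc q)"
    by (simp add: pos_root_def root_act_def)
qed

lemma segment_in_shift_le:
  assumes "\<forall>\<alpha>\<in>A. pos_root (root_act f \<alpha>)" "segment_in A p r" "p \<le> r"
  shows "f p + (r - p) \<le> f r"
  using increasing_steps_imp_shift_le[OF segment_in_increasing_steps[OF assms(1,2)] assms(3)]
  by simp

lemma segment_in_imp_segment_in_root_act:
  assumes "bij \<sigma>" "\<forall>\<alpha>\<in>T. pos_root (root_act \<sigma> \<alpha>)" "\<forall>\<alpha>\<in>S. pos_root (root_act (inv \<sigma>) \<alpha>)"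
    and "segment_in T j i" "\<sigma> j \<le> \<sigma> i" "segment_in S (\<sigma> j) (\<sigma> i)"
  shows "segment_in (root_act \<sigma> ` T) (\<sigma> j) (\<sigma> i)"
proof -
  have "inv \<sigma> (\<sigma> j) + (\<sigma> i - \<sigma> j) \<le> inv \<sigma> (\<sigma> i)"
    using assms(3,6,5) by (rule segment_in_shift_le)
  then have ij: "j + (\<sigma> i - \<sigma> j) \<le> i"
    using assms(1) by (simp add: bij_is_inj)
  have increasing: "\<forall>q\<in>{j..<i}. \<sigma> q < \<sigma> (Suc q)"
    using assms(2,4) by (rule segment_in_increasing_steps)
  have shift: "\<sigma> x = \<sigma> j + (x - j)" if "j \<le> x" "x \<le> i" for x
    using increasing_steps_rigid[OF increasing _ that] ij assms(5) by linarith
  show ?thesis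
    unfolding segment_in_def
  proof
    fix q assume q: "q \<in> {\<sigma> j..<\<sigma> i}"
    define x where "x = j + (q - \<sigma> j)"
    have x: "j \<le> x" "x < i"
      using q ij by (auto simp: x_def)
    have "root_act \<sigma> (x, Suc x) = (q, Suc q)"
      using shift[of x] shift[of "Suc x"] x q by (simp add: root_act_def x_def)
    moreover have "(x, Suc x) \<in> T"
      using assms(4) x by (simp add: segment_in_def)
    ultimately show "(q, Suc q) \<in> root_act \<sigma> ` T"
      by (metis image_eqI)
  qed
qed

lemma segment_in_root_act_imp_segment_in:
  assumes "bij \<sigma>" "T \<subseteq> simple_roots m" "\<sigma> j \<le> \<sigma> i"
    and "segment_in (root_act \<sigma> ` T) (\<sigma> j) (\<sigma> i)"
  shows "segment_in T j i"
proof -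
  have step: "inv \<sigma> (Suc q) = Suc (inv \<sigma> q) \<and> (inv \<sigma> q, Suc (inv \<sigma> q)) \<in> T"
    if "q \<in> {\<sigma> j..<\<sigma> i}" for q
  proof -
    have "(q, Suc q) \<in> root_act \<sigma> ` T"
      using assms(4) that by (simp add: segment_in_def)
    then obtain y where y: "y \<in> T" "root_act \<sigma> y = (q, Suc q)"
      by (metis imageE)
    moreover obtain x where "y = (x, Suc x)"
      using y(1) assms(2) by (auto simp: simple_roots_def)
    ultimately have "(x, Suc x) \<in> T" "\<sigma> x = q" "\<sigma> (Suc x) = Suc q"
      by (auto simp: root_act_def)
    moreover have "inv \<sigma> q = x" "inv \<sigma> (Suc q) = Suc x"
      using calculation(2,3) assms(1) by (auto intro: inv_f_eq bij_is_inj)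
    ultimately show ?thesis
      by simp
  qed
  have shift: "inv \<sigma> y = j + (y - \<sigma> j)" if "\<sigma> j \<le> y" "y \<le> \<sigma> i" for y
    using unit_steps_imp_shift_eq[of "\<sigma> j" "\<sigma> i" "inv \<sigma>" y] step that assms(1)
    by (simp add: bij_is_inj)
  have i: "i = j + (\<sigma> i - \<sigma> j)"
    using shift[of "\<sigma> i"] assms(1,3) by (simp add: bij_is_inj)
  show ?thesis
    unfolding segment_in_def
  proof
    fix k assume k: "k \<in> {j..<i}"
    define q where "q = \<sigma> j + (k - j)"
    have q: "q \<in> {\<sigma> j..<\<sigma> i}"
      using k i by (auto simp: q_def)
    have "inv \<sigma> q = k"
      using shift[of q] q k by (simp add: q_def)
    with step[OF q] show "(k, Suc k) \<in> T"
      by simp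
  qed
qed

lemma in_cone_simple_roots_iff:
  assumes "T \<subseteq> simple_roots m" "i < m" "j < m" "i \<noteq> j"
  shows "in_cone (simple_roots m) T (i, j) \<longleftrightarrow> i < j \<or> (j < i \<and> segment_in T j i)"
  using in_cone_simple_iff[OF order_refl assms(1,4)] segment_in_simple_roots[OF assms(3)] by auto

lemma in_cone_simple_roots_opposite_iff:
  assumes "S \<subseteq> simple_roots m" "i < m" "j < m" "i \<noteq> j"
  shows "in_cone (simple_roots m) S (i, j) \<and> in_cone (simple_roots m) S (j, i) \<longleftrightarrow> in_cone S S (i, j)"
  using in_cone_simple_roots_iff[OF assms] in_cone_simple_roots_iff[OF assms(1,3,2) assms(4)[symmetric]]
    in_cone_simple_iff[OF assms(1,1,4)] by auto

lemma in_cone_simple_roots_iff_on_block: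
  fixes \<sigma> :: "nat \<Rightarrow> nat" and S :: "(nat \<times> nat) set"
  defines "S' \<equiv> root_act (inv \<sigma>) ` S"
  assumes perm: "\<sigma> permutes {..<m}" and S: "S \<subseteq> simple_roots m" and T: "T \<subseteq> simple_roots m"
    and posT: "\<forall>\<alpha>\<in>T. pos_root (root_act \<sigma> \<alpha>)" and posS: "\<forall>\<alpha>\<in>S. pos_root (root_act (inv \<sigma>) \<alpha>)"
    and root: "\<alpha> \<in> roots m" and block: "in_cone S' S' \<alpha>"
  shows "in_cone (simple_roots m) T \<alpha> \<longleftrightarrow> in_cone S' (T \<inter> S') \<alpha>"
proof -
  obtain i j where ij: "\<alpha> = (i, j)" "i < m" "j < m" "i \<noteq> j"
    using root by (auto simp: roots_def)
  have bij: "bij \<sigma>"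
    using perm by (rule permutes_bij)
  have "\<sigma> i \<noteq> \<sigma> j"
    using ij(4) bij by (simp add: bij_is_inj inj_eq)
  have TS': "T \<inter> S' = root_act (inv \<sigma>) ` (root_act \<sigma> ` T \<inter> S)"
    unfolding S'_def image_Int[OF inj_root_act[OF bij_imp_bij_inv[OF bij]]] image_image
    by (simp add: root_act_inv_root_act[OF bij])
  have "root_act \<sigma> ` T \<inter> S \<subseteq> simple_roots m"
    using S by blast
  then have rhs: "in_cone S' (T \<inter> S') \<alpha> \<longleftrightarrow> (\<sigma> i < \<sigma> j \<and> segment_in S (\<sigma> i) (\<sigma> j))
      \<or> (\<sigma> j < \<sigma> i \<and> segment_in (root_act \<sigma> ` T \<inter> S) (\<sigma> j) (\<sigma> i))"
    unfolding TS' unfolding S'_def ij(1) in_cone_inv_root_act_iff[OF bij]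
    using in_cone_simple_iff[OF S _ \<open>\<sigma> i \<noteq> \<sigma> j\<close>] by (simp add: root_act_def)
  have "in_cone S S (\<sigma> i, \<sigma> j)"
    using block unfolding S'_def ij(1) in_cone_inv_root_act_iff[OF bij] by (simp add: root_act_def)
  then consider "\<sigma> i < \<sigma> j" "segment_in S (\<sigma> i) (\<sigma> j)" | "\<sigma> j < \<sigma> i" "segment_in S (\<sigma> j) (\<sigma> i)"
    using in_cone_simple_iff[OF S S \<open>\<sigma> i \<noteq> \<sigma> j\<close>] by blast
  then show ?thesis
  proof cases
    case 1
    have "inv \<sigma> (\<sigma> i) + (\<sigma> j - \<sigma> i) \<le> inv \<sigma> (\<sigma> j)"
      using segment_in_shift_le[OF posS 1(2)] 1(1) by simp
    with 1(1) bij have "i < j"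
      by (simp add: bij_is_inj)
    then show ?thesis
      using 1 rhs in_cone_simple_roots_iff[OF T ij(2-4)] ij(1) by auto
  next
    case 2
    have "inv \<sigma> (\<sigma> j) + (\<sigma> i - \<sigma> j) \<le> inv \<sigma> (\<sigma> i)"
      using segment_in_shift_le[OF posS 2(2)] 2(1) by simp
    with 2(1) bij have "j < i"
      by (simp add: bij_is_inj)
    have "segment_in T j i \<longleftrightarrow> segment_in (root_act \<sigma> ` T) (\<sigma> j) (\<sigma> i)"
      using segment_in_imp_segment_in_root_act[OF bij posT posS _ _ 2(2)]
        segment_in_root_act_imp_segment_in[OF bij T] 2(1) by auto
    then show ?thesis
      using 2 rhs in_cone_simple_roots_iff[OF T ij(2-4)] \<open>j < i\<close> ij(1) segment_in_Int by auto
  qed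
qed

section \<open>Conjugation by permutation matrices\<close>

definition reindex_mat :: "nat \<Rightarrow> (nat \<Rightarrow> nat) \<Rightarrow> 'a::zero sqmat \<Rightarrow> 'a sqmat" where
  "reindex_mat m f g = (\<lambda>i j. if i < m \<and> j < m then g (f i) (f j) else 0)"

lemma permutes_lessThan_less_iff: "\<sigma> permutes {..<m} \<Longrightarrow> \<sigma> i < m \<longleftrightarrow> i < m"
  using permutes_in_image[of \<sigma> "{..<m}" i] by simp

lemma mmul_perm_mat_right:
  assumes "\<sigma> permutes {..<m}"
  shows "mmul m g (perm_mat m \<sigma>) = (\<lambda>i j. if i < m \<and> j < m then g i (\<sigma> j) else (0::'a::comm_ring_1))"
proof (intro ext)
  fix i j
  have "(\<Sum>k<m. g i k * perm_mat m \<sigma> k j) = (\<Sum>k<m. if k = \<sigma> j \<and> j < m then g i k else 0)"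
    by (rule sum.cong) (auto simp: perm_mat_def)
  also have "\<dots> = (if j < m then g i (\<sigma> j) else 0)"
    using permutes_lessThan_less_iff[OF assms, of j] by (cases "j < m") auto
  finally show "mmul m g (perm_mat m \<sigma>) i j = (if i < m \<and> j < m then g i (\<sigma> j) else 0)"
    by (simp add: mmul_def)
qed

lemma mmul_perm_mat_inv_left:
  assumes "\<sigma> permutes {..<m}"
  shows "mmul m (perm_mat m (inv \<sigma>)) h = (\<lambda>i j. if i < m \<and> j < m then h (\<sigma> i) j else (0::'a::comm_ring_1))"
proof (intro ext)
  fix i j
  have "i = inv \<sigma> k \<longleftrightarrow> k = \<sigma> i" for k
    using permutes_inverses[OF assms] by metis
  then have "(\<Sum>k<m. perm_mat m (inv \<sigma>) i k * h k j) = (\<Sum>k<m. if k = \<sigma> i \<and> i < m then h k j else 0)"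
    by (intro sum.cong) (auto simp: perm_mat_def)
  also have "\<dots> = (if i < m then h (\<sigma> i) j else 0)"
    using permutes_lessThan_less_iff[OF assms, of i] by (cases "i < m") auto
  finally show "mmul m (perm_mat m (inv \<sigma>)) h i j = (if i < m \<and> j < m then h (\<sigma> i) j else 0)"
    by (simp add: mmul_def)
qed

lemma conj_by_perm_eq_image:
  assumes "\<sigma> permutes {..<m}"
  shows "conj_by_perm m \<sigma> H = reindex_mat m \<sigma> ` (H :: 'a::comm_ring_1 sqmat set)"
  using permutes_lessThan_less_iff[OF assms]
  by (auto simp: conj_by_perm_def mmul_perm_mat_right[OF assms] mmul_perm_mat_inv_left[OF assms]
      reindex_mat_def image_def cong: if_cong)

lemma mmul_reindex_mat:
  assumes "f permutes {..<m}"
  shows "mmul m (reindex_mat m f A) (reindex_mat m f B) = reindex_mat m f (mmul m (A::'a::comm_ring_1 sqmat) B)"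
proof (intro ext)
  fix i j
  have "(\<Sum>k<m. A (f i) (f k) * B (f k) (f j)) = (\<Sum>k\<in>f ` {..<m}. A (f i) k * B k (f j))"
    using permutes_inj_on[OF assms] by (simp add: sum.reindex)
  also have "f ` {..<m} = {..<m}"
    using assms by (rule permutes_image)
  finally show "mmul m (reindex_mat m f A) (reindex_mat m f B) i j = reindex_mat m f (mmul m A B) i j"
    using permutes_lessThan_less_iff[OF assms] by (simp add: mmul_def reindex_mat_def)
qed

lemma reindex_mat_idm:
  assumes "f permutes {..<m}"
  shows "reindex_mat m f (idm m) = (idm m :: 'a::comm_ring_1 sqmat)"
  using permutes_lessThan_less_iff[OF assms] permutes_inj_on[OF assms]
  by (auto simp: reindex_mat_def idm_def fun_eq_iff inj_on_eq_iff)

lemma reindex_mat_GLm: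
  assumes "f permutes {..<m}" "(0::'a::field) \<in> R" "g \<in> GLm m R"
  shows "reindex_mat m f g \<in> GLm m R"
proof -
  obtain h where h: "h \<in> mats m" "\<forall>i j. h i j \<in> R" "mmul m g h = idm m" "mmul m h g = idm m"
    using assms(3) unfolding GLm_def by blast
  have "\<forall>i j. g i j \<in> R"
    using assms(3) unfolding GLm_def by blast
  then show ?thesis
    unfolding GLm_def
    using assms(2) h mmul_reindex_mat[OF assms(1), of g h] mmul_reindex_mat[OF assms(1), of h g]
      reindex_mat_idm[OF assms(1)]
    by (intro CollectI conjI bexI[of _ "reindex_mat m f h"]) (auto simp: mats_def reindex_mat_def)
qed

lemma reindex_mat_reindex_mat_inv:
  assumes "\<sigma> permutes {..<m}" "g \<in> mats m"
  shows "reindex_mat m \<sigma> (reindex_mat m (inv \<sigma>) g) = g"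
  using assms(2) permutes_lessThan_less_iff[OF assms(1)] permutes_inverses[OF assms(1)]
  by (auto simp: reindex_mat_def mats_def fun_eq_iff)

lemma mmul_elem_mat:
  assumes "a \<noteq> b" "a < m" "b < m"
  shows "mmul m (elem_mat m a b c) (elem_mat m a b d) = (elem_mat m a b (c + d) :: 'a::comm_ring_1 sqmat)"
proof (intro ext)
  fix i j
  show "mmul m (elem_mat m a b c) (elem_mat m a b d) i j = elem_mat m a b (c + d) i j"
  proof (cases "i < m \<and> j < m")
    case True
    have "(\<Sum>k<m. elem_mat m a b c i k * elem_mat m a b d k j)
      = (\<Sum>k<m. (if k = i then idm m k j else 0) + (if k = a \<and> j = b then idm m i k * d else 0)
              + (if k = b \<and> i = a then c * idm m k j else 0))"
      by (rule sum.cong) (use assms True in \<open>auto simp: elem_mat_def idm_def algebra_simps\<close>)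
    also have "\<dots> = idm m i j + (if j = b then idm m i a * d else 0) + (if i = a then c * idm m b j else 0)"
      using assms True by (simp add: sum.distrib)
    finally show ?thesis
      using assms True by (auto simp: mmul_def elem_mat_def idm_def)
  qed (use assms in \<open>auto simp: mmul_def elem_mat_def idm_def\<close>)
qed

lemma elem_mat_GLm:
  assumes "a \<noteq> b" "a < m" "b < m"
  shows "elem_mat m a b c \<in> GLm m (UNIV :: 'a::field set)"
proof -
  have "elem_mat m a b 0 = (idm m :: 'a sqmat)"
    by (simp add: elem_mat_def fun_eq_iff)
  then show ?thesis
    unfolding GLm_def using assms mmul_elem_mat[OF assms, of c "-c"] mmul_elem_mat[OF assms, of "-c" c]
    by (intro CollectI conjI bexI[of _ "elem_mat m a b (-c)"]) (auto simp: mats_def elem_mat_def idm_def)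
qed

section \<open>Levi subgroups and the groups J\<close>

lemma conj_by_perm_P_ST:
  assumes perm: "\<sigma> permutes {..<m}" and zero: "(0::'a::field) \<in> R"
  shows "conj_by_perm m \<sigma> (P_ST m R A B) = P_ST m R (root_act (inv \<sigma>) ` A) (root_act (inv \<sigma>) ` B)"
proof -
  have bij: "bij \<sigma>"
    using perm by (rule permutes_bij)
  have cone: "in_cone (root_act (inv \<sigma>) ` A) (root_act (inv \<sigma>) ` B) (i, j) \<longleftrightarrow> in_cone A B (\<sigma> i, \<sigma> j)"
    for i j using in_cone_inv_root_act_iff[OF bij] by (simp add: root_act_def)
  have roots: "(\<sigma> i, \<sigma> j) \<in> roots m \<longleftrightarrow> (i, j) \<in> roots m" for i j
    using permutes_lessThan_less_iff[OF perm] bij by (auto simp: roots_def bij_is_inj inj_eq)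
  have inv_roots: "(inv \<sigma> i, inv \<sigma> j) \<in> roots m \<longleftrightarrow> (i, j) \<in> roots m" for i j
    using roots[of "inv \<sigma> i" "inv \<sigma> j"] permutes_inverses(1)[OF perm] by simp
  show ?thesis
  proof (intro set_eqI iffI)
    fix g assume "g \<in> conj_by_perm m \<sigma> (P_ST m R A B)"
    then obtain h where h: "h \<in> P_ST m R A B" "g = reindex_mat m \<sigma> h"
      by (auto simp: conj_by_perm_eq_image[OF perm])
    have "in_cone A B (\<sigma> i, \<sigma> j)" if "(i, j) \<in> roots m" "g i j \<noteq> 0" for i j
      using h that roots[of i j] by (auto simp: P_ST_def reindex_mat_def roots_def)
    then show "g \<in> P_ST m R (root_act (inv \<sigma>) ` A) (root_act (inv \<sigma>) ` B)"
      using h reindex_mat_GLm[OF perm zero] by (auto simp: P_ST_def cone)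
  next
    fix g assume g: "g \<in> P_ST m R (root_act (inv \<sigma>) ` A) (root_act (inv \<sigma>) ` B)"
    define h where "h = reindex_mat m (inv \<sigma>) g"
    have "in_cone A B (k, l)" if "(k, l) \<in> roots m" "h k l \<noteq> 0" for k l
      using g that inv_roots[of k l] cone[of "inv \<sigma> k" "inv \<sigma> l"] permutes_inverses(1)[OF perm]
      by (auto simp: P_ST_def h_def reindex_mat_def roots_def)
    then have "h \<in> P_ST m R A B"
      using g reindex_mat_GLm[OF permutes_inv[OF perm] zero] by (auto simp: P_ST_def h_def)
    moreover have "g \<in> mats m"
      using g by (auto simp: P_ST_def GLm_def)
    then have "g = reindex_mat m \<sigma> h"
      by (simp add: h_def reindex_mat_reindex_mat_inv[OF perm])
    ultimately show "g \<in> conj_by_perm m \<sigma> (P_ST m R A B)"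
      by (auto simp: conj_by_perm_eq_image[OF perm])
  qed
qed

lemma roots_of_P_ST:
  assumes "\<alpha> \<in> roots m"
  shows "\<alpha> \<in> roots_of m (P_ST m (UNIV :: 'a::field set) A B) \<longleftrightarrow> in_cone A B \<alpha>"
proof -
  obtain i j where ij: "\<alpha> = (i, j)" "i < m" "j < m" "i \<noteq> j"
    using assms by (auto simp: roots_def)
  show ?thesis
  proof
    assume "\<alpha> \<in> roots_of m (P_ST m (UNIV :: 'a set) A B)"
    then have "elem_mat m i j (1::'a) \<in> P_ST m UNIV A B"
      by (simp add: roots_of_def ij)
    then show "in_cone A B \<alpha>"
      using assms ij by (auto simp: P_ST_def elem_mat_def idm_def)
  next
    assume "in_cone A B \<alpha>"
    then have "elem_mat m i j c \<in> P_ST m (UNIV :: 'a set) A B" for c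
      using elem_mat_GLm[OF ij(4,2,3)] ij by (auto simp: P_ST_def elem_mat_def idm_def roots_def)
    then show "\<alpha> \<in> roots_of m (P_ST m (UNIV :: 'a set) A B)"
      using assms ij by (simp add: roots_of_def)
  qed
qed

lemma Levi_P_ST:
  assumes "\<And>\<alpha>. \<alpha> \<in> roots m \<Longrightarrow> in_cone A B \<alpha> \<and> in_cone A B (snd \<alpha>, fst \<alpha>) \<longleftrightarrow> in_cone C C \<alpha>"
  shows "Levi m (P_ST m (UNIV :: 'a::field set) A B) = P_ST m UNIV C C"
proof -
  have swap: "(snd \<alpha>, fst \<alpha>) \<in> roots m" if "\<alpha> \<in> roots m" for \<alpha>
    using that by (auto simp: roots_def)
  have "Levi m (P_ST m (UNIV :: 'a set) A B) =
      {g \<in> P_ST m UNIV A B. \<forall>\<alpha>\<in>roots m. g (fst \<alpha>) (snd \<alpha>) \<noteq> 0 \<longrightarrow> in_cone C C \<alpha>}"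
    unfolding Levi_def using roots_of_P_ST swap assms by (metis (no_types, lifting) prod.collapse)
  also have "\<dots> = P_ST m UNIV C C"
    using assms by (auto simp: P_ST_def)
  finally show ?thesis .
qed

lemma Levi_conj_parabolic:
  assumes perm: "\<sigma> permutes {..<m}" and S: "S \<subseteq> simple_roots m"
  shows "Levi m (conj_by_perm m \<sigma> (P_ST m (UNIV :: 'a::field set) (simple_roots m) S))
    = P_ST m UNIV (root_act (inv \<sigma>) ` S) (root_act (inv \<sigma>) ` S)"
proof -
  have bij: "bij \<sigma>"
    using perm by (rule permutes_bij)
  have "in_cone (root_act (inv \<sigma>) ` simple_roots m) (root_act (inv \<sigma>) ` S) \<alpha>
      \<and> in_cone (root_act (inv \<sigma>) ` simple_roots m) (root_act (inv \<sigma>) ` S) (snd \<alpha>, fst \<alpha>)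
      \<longleftrightarrow> in_cone (root_act (inv \<sigma>) ` S) (root_act (inv \<sigma>) ` S) \<alpha>"
    if root: "\<alpha> \<in> roots m" for \<alpha>
  proof -
    obtain i j where ij: "\<alpha> = (i, j)" "i < m" "j < m" "i \<noteq> j"
      using root by (auto simp: roots_def)
    have "\<sigma> i < m" "\<sigma> j < m" "\<sigma> i \<noteq> \<sigma> j"
      using ij permutes_lessThan_less_iff[OF perm] bij by (auto simp: bij_is_inj inj_eq)
    then show ?thesis
      unfolding ij(1) in_cone_inv_root_act_iff[OF bij]
      using in_cone_simple_roots_opposite_iff[OF S] by (simp add: root_act_def)
  qed
  then show ?thesis
    unfolding conj_by_perm_P_ST[OF perm UNIV_I] by (rule Levi_P_ST)
qed

lemma P_ST_inter_J_ST:
  assumes "\<And>\<alpha>. \<alpha> \<in> roots m \<Longrightarrow> in_cone A A \<alpha> \<Longrightarrow>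
      in_cone (simple_roots m) T \<alpha> \<longleftrightarrow> in_cone A B \<alpha>"
  shows "P_ST m UNIV A A \<inter> J_ST v \<pi> m (simple_roots m) T = J_ST v \<pi> m A B"
proof -
  have "in_cone (simple_roots m) (simple_roots m) \<alpha>" if "\<alpha> \<in> roots m" for \<alpha>
    using that in_cone_simple_roots_iff[OF order_refl] segment_in_simple_roots
    by (auto simp: roots_def)
  moreover have "0 \<in> unif_ideal v \<pi>"
    by (auto simp: unif_ideal_def val_ring_def)
  moreover have "GLm m (val_ring v) \<subseteq> GLm m UNIV"
    by (auto simp: GLm_def)
  ultimately show ?thesis
    using assms unfolding J_ST_def P_ST_def by (auto 0 4)
qed

theorem lemma1p1:
  fixes v :: "'a::field \<Rightarrow> int" and \<pi> :: 'a and n :: nat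
    and \<sigma> :: "nat \<Rightarrow> nat" and S T' :: "(nat \<times> nat) set"
  assumes "is_nonarch_local_field v"
    and "is_uniformizer v \<pi>"
    and "\<sigma> permutes {..<2*n}"
    and "S \<subseteq> simple_roots (2*n)" and "T' \<subseteq> simple_roots (2*n)"
    and "\<forall>\<alpha>\<in>T'. pos_root (root_act \<sigma> \<alpha>)"
    and "\<forall>\<alpha>\<in>S. pos_root (root_act (inv \<sigma>) \<alpha>)"
  shows "Levi (2*n) (conj_by_perm (2*n) \<sigma> (P_ST (2*n) UNIV (simple_roots (2*n)) S))
           \<inter> J_ST v \<pi> (2*n) (simple_roots (2*n)) T'
         = J_ST v \<pi> (2*n) (root_act (inv \<sigma>) ` S) (T' \<inter> root_act (inv \<sigma>) ` S)"
proof -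
  let ?S' = "root_act (inv \<sigma>) ` S"
  have "Levi (2*n) (conj_by_perm (2*n) \<sigma> (P_ST (2*n) (UNIV :: 'a set) (simple_roots (2*n)) S))
      = P_ST (2*n) UNIV ?S' ?S'"
    using assms(3,4) by (rule Levi_conj_parabolic)
  moreover have "P_ST (2*n) UNIV ?S' ?S' \<inter> J_ST v \<pi> (2*n) (simple_roots (2*n)) T'
      = J_ST v \<pi> (2*n) ?S' (T' \<inter> ?S')"
    using in_cone_simple_roots_iff_on_block[OF assms(3-7)] by (rule P_ST_inter_J_ST)
  ultimately show ?thesis
    by simp
qed

end
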